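(* Let $\mathcal{B}\subset\{1,\dots,K\}$. Consider two $K$-tier closed access networks (user may connect only to tiers in $\mathcal{B}$) as described in the context, identical (same point processes $\Phi_k$, powers $P_k$, target SIRs $\beta_k$, path loss exponent) except that the first has channel parameters $\{\Delta_k\},\{\Psi_k\}$ and the second $\{\Delta'_k\},\{\Psi'_k\}$. If $\Delta_k\ge\Delta'_k$ for all $k\in\mathcal{B}$ and $\Psi_k\le\Psi'_k$ for all $k\in\{1,\dots,K\}$, then the closed access coverage probability of the first network is greater than or equal to that of the second.
   Context: Downlink $K$-tier cellular network with tiers indexed by $\mathcal{K}=\{1,\dots,K\}$. Tier-$k$ base stations (BSs) are located at the points of a stationary point process $\Phi_k\subset\mathbb{R}^2$ (not necessarily independent across tiers), transmit with per-user power $P_k>0$ and have target SIR $\beta_k>0$; each tier has positive integer channel parameters $\Delta_k,\Psi_k$. $\alpha$ is the path loss exponent; a typical user is at the origin. Each BS at $x\in\Phi_k$ carries channel-power marks $h_{kx}\sim\Gamma(\Delta_k,1)$ (desired link) and $g_{kx}\sim\Gamma(\Psi_k,1)$ (interfering link), all mutually independent and independent of the point processes. $\mathrm{SIR}(x_k)=\dfrac{P_kh_{kx_k}\|x_k\|^{-\alpha}}{\sum_{j\in\mathcal{K}}\sum_{y\in\Phi_j\setminus\{x_k\}}P_jg_{jy}\|y\|^{-\alpha}}$ for $x_k\in\Phi_k$ (all tiers interfere). The closed access coverage probability with accessible tier set $\mathcal{B}$ is $\mathbb{P}\big(\bigcup_{k\in\mathcal{B}}\{\max_{x_k\in\Phi_k}\mathrm{SIR}(x_k)>\beta_k\}\big)$.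 $\Gamma(a,1)$ is the Gamma distribution with shape $a$, scale $1$. *)

theory Defs
  imports "HOL-Probability.Probability"
begin

type_synonym point = "real ^ 2"
(* a configuration assigns to each tier index k the set of tier-k BS locations *)
type_synonym config = "nat \<Rightarrow> point set"
(* mark outcome: site (k,x) \<mapsto> (h_{kx}, g_{kx}) *)
type_synonym marks = "nat \<times> point \<Rightarrow> real \<times> real"

text \<open>Gamma(a,1) distribution for a positive integer shape a (= Erlang with shape a, rate 1).\<close>
definition gamma_dist :: "nat \<Rightarrow> real measure" where
  "gamma_dist a = density lborel (erlang_density (a - 1) 1)"

definition configs :: "nat \<Rightarrow> config set" where
  "configs K = {\<phi>. (\<forall>k. k \<notin> {1..K} \<longrightarrow> \<phi> k = {}) \<and>
      (\<forall>k\<in>{1..K}. \<forall>S. bounded S \<longrightarrow> finite (\<phi> k \<inter> S))}"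

definition config_space :: "nat \<Rightarrow> config measure" where
  "config_space K = sigma (configs K)
     {{\<phi> \<in> configs K. card (\<phi> k \<inter> S) = n} | k S n.
        k \<in> {1..K} \<and> S \<in> sets borel \<and> bounded S}"

definition shift :: "point \<Rightarrow> config \<Rightarrow> config" where
  "shift v \<phi> = (\<lambda>k. (\<lambda>x. x + v) ` \<phi> k)"

definition stationary :: "nat \<Rightarrow> config measure \<Rightarrow> bool" where
  "stationary K Q \<longleftrightarrow> (\<forall>v. distr Q (config_space K) (shift v) = Q)"

definition sites :: "nat \<Rightarrow> config \<Rightarrow> (nat \<times> point) set" where
  "sites K \<phi> = {(k, x). k \<in> {1..K} \<and> x \<in> \<phi> k}"

text \<open>Conditional law of the marks given the configuration: all marks independent,
  h_{kx} ~ Gamma(Delta k,1), g_{kx} ~ Gamma(Psi k,1).\<close>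
definition mark_measure :: "nat \<Rightarrow> config \<Rightarrow> (nat \<Rightarrow> nat) \<Rightarrow> (nat \<Rightarrow> nat) \<Rightarrow> marks measure" where
  "mark_measure K \<phi> \<Delta> \<Psi> =
     PiM (sites K \<phi>) (\<lambda>(k, x). gamma_dist (\<Delta> k) \<Otimes>\<^sub>M gamma_dist (\<Psi> k))"

definition interference :: "nat \<Rightarrow> config \<Rightarrow> (nat \<Rightarrow> real) \<Rightarrow> real \<Rightarrow> marks \<Rightarrow> point \<Rightarrow> ennreal" where
  "interference K \<phi> P \<alpha> \<omega> x =
     (\<integral>\<^sup>+ jy. ennreal (P (fst jy) * snd (\<omega> jy) * norm (snd jy) powr (- \<alpha>))
        \<partial>count_space {(j, y) \<in> sites K \<phi>. y \<noteq> x})"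

definition SIR :: "nat \<Rightarrow> config \<Rightarrow> (nat \<Rightarrow> real) \<Rightarrow> real \<Rightarrow> marks \<Rightarrow> nat \<Rightarrow> point \<Rightarrow> ennreal" where
  "SIR K \<phi> P \<alpha> \<omega> k x =
     ennreal (P k * fst (\<omega> (k, x)) * norm x powr (- \<alpha>)) / interference K \<phi> P \<alpha> \<omega> x"

definition covered :: "nat \<Rightarrow> nat set \<Rightarrow> config \<Rightarrow> (nat \<Rightarrow> real) \<Rightarrow> (nat \<Rightarrow> real) \<Rightarrow> real
      \<Rightarrow> (nat \<Rightarrow> nat) \<Rightarrow> (nat \<Rightarrow> nat) \<Rightarrow> marks set" where
  "covered K \<B> \<phi> P \<beta> \<alpha> \<Delta> \<Psi> =
     {\<omega> \<in> space (mark_measure K \<phi> \<Delta> \<Psi>).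
        \<exists>k\<in>\<B>. \<exists>x\<in>\<phi> k. SIR K \<phi> P \<alpha> \<omega> k x > ennreal (\<beta> k)}"

text \<open>Closed access coverage probability: average over the point process law Q of the
  conditional (given the BS locations) probability over the independent marks.\<close>
definition coverage :: "nat \<Rightarrow> nat set \<Rightarrow> config measure \<Rightarrow> (nat \<Rightarrow> real) \<Rightarrow> (nat \<Rightarrow> real) \<Rightarrow> real
      \<Rightarrow> (nat \<Rightarrow> nat) \<Rightarrow> (nat \<Rightarrow> nat) \<Rightarrow> ennreal" where
  "coverage K \<B> Q P \<beta> \<alpha> \<Delta> \<Psi> =
     (\<integral>\<^sup>+ \<phi>. emeasure (mark_measure K \<phi> \<Delta> \<Psi>) (covered K \<B> \<phi> P \<beta> \<alpha> \<Delta> \<Psi>) \<partial>Q)"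

end

theory Submission
  imports Defs "HOL-Probability.Convolution"
begin

text \<open>Conditionally on the base station locations the two networks are compared by a coupling.
  At every site draw independent Gamma variables and build both mark families from them:
  since Gamma(a,1) + Gamma(b,1) = Gamma(a+b,1) for independent summands, a desired-link mark of
  shape \<open>\<Delta>\<close> is the common part of shape \<open>min \<Delta> \<Delta>'\<close> plus an independent increment, and likewise the
  interfering mark of shape \<open>\<Psi>'\<close> is the one of shape \<open>\<Psi>\<close> plus an increment. Both families then
  have the correct product laws, and pointwise the first network has larger desired signals on
  the accessible tiers and smaller interference everywhere, so every SIR is larger and the
  coverage event of the second network is contained in that of the first.\<close>

lemma emeasure_distr_mono_coupling:
  assumes f: "f \<in> measurable S N" and f': "f' \<in> measurable S N"
    and mono: "\<And>z. z \<in> space S \<Longrightarrow> f' z \<in> C \<Longrightarrow> f z \<in> C"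
  shows "emeasure (distr S N f') C \<le> emeasure (distr S N f) C"
proof (cases "C \<in> sets N")
  case True
  have "emeasure (distr S N f') C = emeasure S (f' -` C \<inter> space S)"
    by (rule emeasure_distr[OF f' True])
  also have "\<dots> \<le> emeasure S (f -` C \<inter> space S)"
    using mono by (intro emeasure_mono measurable_sets[OF f True]) auto
  also have "\<dots> = emeasure (distr S N f) C"
    by (rule emeasure_distr[OF f True, symmetric])
  finally show ?thesis .
qed (simp add: emeasure_notin_sets)

lemma measurable_PiM_map:
  assumes "\<And>i. i \<in> I \<Longrightarrow> f i \<in> measurable (M i) (M' i)"
  shows "(\<lambda>z. \<lambda>i\<in>I. f i (z i)) \<in> measurable (PiM I M) (PiM I M')"
  using assms by (intro measurable_restrict measurable_compose[OF measurable_component_singleton]) auto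

lemma distr_PiM_map:
  assumes M: "\<And>i. i \<in> I \<Longrightarrow> prob_space (M i)"
    and f: "\<And>i. i \<in> I \<Longrightarrow> f i \<in> measurable (M i) (M' i)"
  shows "distr (PiM I M) (PiM I M') (\<lambda>z. \<lambda>i\<in>I. f i (z i)) = PiM I (\<lambda>i. distr (M i) (M' i) (f i))"
    (is "distr _ _ ?F = _")
proof (rule measure_eqI_PiM_infinite[where M=M'])
  have F: "?F \<in> measurable (PiM I M) (PiM I M')"
    using f by (rule measurable_PiM_map)
  show "sets (distr (PiM I M) (PiM I M') ?F) = sets (PiM I M')" by simp
  show "sets (PiM I (\<lambda>i. distr (M i) (M' i) (f i))) = sets (PiM I M')"
    by (intro sets_PiM_cong) auto
  show "finite_measure (distr (PiM I M) (PiM I M') ?F)"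
    using M F by (intro prob_space.finite_measure prob_space.prob_space_distr prob_space_PiM)
  fix A J assume J: "finite J" "J \<subseteq> I" and A: "\<And>i. i \<in> J \<Longrightarrow> A i \<in> sets (M' i)"
  have emb: "prod_emb I M' J (Pi\<^sub>E J A) \<in> sets (PiM I M')"
    using J A by (intro measurable_prod_emb sets_PiM_I_finite) auto
  have preimage: "?F -` prod_emb I M' J (Pi\<^sub>E J A) \<inter> space (PiM I M)
      = prod_emb I M J (Pi\<^sub>E J (\<lambda>i. f i -` A i \<inter> space (M i)))"
    using J measurable_space[OF f] by (auto simp: prod_emb_def space_PiM PiE_iff subset_eq)
  have "emeasure (distr (PiM I M) (PiM I M') ?F) (prod_emb I M' J (Pi\<^sub>E J A))
      = (\<Prod>i\<in>J. emeasure (M i) (f i -` A i \<inter> space (M i)))"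
    using J A by (simp add: emeasure_distr[OF F emb] preimage emeasure_PiM_emb M
        measurable_sets[OF f] subset_eq)
  also have "\<dots> = (\<Prod>i\<in>J. emeasure (distr (M i) (M' i) (f i)) (A i))"
    using J A by (intro prod.cong emeasure_distr[symmetric]) (auto intro: f)
  also have "\<dots> = emeasure (PiM I (\<lambda>i. distr (M i) (M' i) (f i)))
      (prod_emb I (\<lambda>i. distr (M i) (M' i) (f i)) J (Pi\<^sub>E J A))"
    using J A by (intro emeasure_PiM_emb[symmetric] prob_space.prob_space_distr M f) auto
  also have "prod_emb I (\<lambda>i. distr (M i) (M' i) (f i)) J (Pi\<^sub>E J A) = prod_emb I M' J (Pi\<^sub>E J A)"
    by (auto simp: prod_emb_def)
  finally show "emeasure (distr (PiM I M) (PiM I M') ?F) (prod_emb I M' J (Pi\<^sub>E J A)) =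
      emeasure (PiM I (\<lambda>i. distr (M i) (M' i) (f i))) (prod_emb I M' J (Pi\<^sub>E J A))" .
qed

lemma measurable_map_prod:
  assumes "f \<in> measurable M M'" "g \<in> measurable N N'"
  shows "map_prod f g \<in> measurable (M \<Otimes>\<^sub>M N) (M' \<Otimes>\<^sub>M N')"
  unfolding map_prod_def split_beta'
  by (intro measurable_Pair measurable_compose[OF measurable_fst assms(1)]
      measurable_compose[OF measurable_snd assms(2)])

lemma distr_pair_snd:
  assumes "prob_space M" "prob_space N"
  shows "distr (M \<Otimes>\<^sub>M N) N snd = N"
proof (rule measure_eqI)
  interpret M: prob_space M by fact
  interpret N: prob_space N by fact
  fix X assume "X \<in> sets (distr (M \<Otimes>\<^sub>M N) N snd)"
  then have X: "X \<in> sets N" by simp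
  have "snd -` X \<inter> space (M \<Otimes>\<^sub>M N) = space M \<times> X"
    using sets.sets_into_space[OF X] by (auto simp: space_pair_measure)
  then show "emeasure (distr (M \<Otimes>\<^sub>M N) N snd) X = emeasure N X"
    using X by (simp add: emeasure_distr N.emeasure_pair_measure_Times M.emeasure_space_1)
qed simp

lemma ennreal_inverse_antimono:
  fixes a b :: ennreal
  assumes "a \<le> b"
  shows "inverse b \<le> inverse a"
proof (cases "a = 0 \<or> b = top")
  case False
  with assms obtain r s where "a = ennreal r" "b = ennreal s" "0 < r" "r \<le> s"
    by (cases a rule: ennreal_cases; cases b rule: ennreal_cases) (auto simp: top_unique)
  then show ?thesis
    by (simp add: inverse_ennreal le_imp_inverse_le)
qed auto

lemma ennreal_divide_mono: "a' \<le> a \<Longrightarrow> b \<le> b' \<Longrightarrow> a' / b' \<le> (a::ennreal) / b"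
  unfolding divide_ennreal_def by (intro mult_mono ennreal_inverse_antimono) auto

lemma prob_space_gamma_dist [simp]: "prob_space (gamma_dist a)"
  unfolding gamma_dist_def by (rule prob_space_erlang_density) simp

lemma sets_gamma_dist [simp, measurable_cong]: "sets (gamma_dist a) = sets borel"
  and space_gamma_dist [simp]: "space (gamma_dist a) = UNIV"
  by (simp_all add: gamma_dist_def)

lemma gamma_dist_add:
  assumes "m \<ge> 1" "n \<ge> 1"
  shows "distr (gamma_dist m \<Otimes>\<^sub>M gamma_dist n) borel (\<lambda>(x, y). x + y) = gamma_dist (m + n)"
proof -
  have "distr (gamma_dist m \<Otimes>\<^sub>M gamma_dist n) borel (\<lambda>(x, y). x + y)
      = density lborel (\<lambda>x. \<integral>\<^sup>+y. ennreal (erlang_density (m - 1) 1 (x - y))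
          * ennreal (erlang_density (n - 1) 1 y) \<partial>lborel)"
    unfolding convolution_def[symmetric] gamma_dist_def
    by (rule convolution_density) (auto intro!: prob_space.finite_measure prob_space_erlang_density)
  also have "\<dots> = density lborel (erlang_density (Suc (m - 1) + Suc (n - 1) - 1) 1)"
    by (subst convolution_erlang_density) auto
  finally show ?thesis
    using assms by (simp add: gamma_dist_def)
qed

lemma distr_gamma_dist_max_0: "distr (gamma_dist n) borel (max 0) = gamma_dist n"
proof (rule measure_eqI)
  fix A :: "real set" assume "A \<in> sets (distr (gamma_dist n) borel (max 0))"
  then have A[measurable]: "A \<in> sets borel" by simp
  have [measurable]: "max 0 -` A \<in> sets borel"
    using measurable_sets[of "max (0::real)" borel borel A] by simp
  have "emeasure (distr (gamma_dist n) borel (max 0)) A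
      = (\<integral>\<^sup>+x. ennreal (erlang_density (n - 1) 1 x) * indicator (max 0 -` A) x \<partial>lborel)"
    by (simp add: emeasure_distr gamma_dist_def emeasure_density)
  also have "\<dots> = (\<integral>\<^sup>+x. ennreal (erlang_density (n - 1) 1 x) * indicator A x \<partial>lborel)"
    by (intro nn_integral_cong) (auto simp: erlang_density_def indicator_def max_def)
  also have "\<dots> = emeasure (gamma_dist n) A"
    by (simp add: gamma_dist_def emeasure_density)
  finally show "emeasure (distr (gamma_dist n) borel (max 0)) A = emeasure (gamma_dist n) A" .
qed simp

text \<open>Shape 0 must give the constant 0, because \<open>gamma_dist 0\<close> is the junk value Gamma(1,1).
  Truncating at 0 does not change the law of a Gamma variable but makes the increment
  nonnegative everywhere rather than almost everywhere, as the pointwise coupling needs.\<close>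

definition gamma_increment :: "nat \<Rightarrow> real \<Rightarrow> real" where
  "gamma_increment n x = (if n = 0 then 0 else max 0 x)"

lemma distr_gamma_add_increment:
  assumes m: "m \<ge> 1" and R: "prob_space R" and w[measurable]: "w \<in> borel_measurable R"
    and law: "n \<noteq> 0 \<Longrightarrow> distr R borel w = gamma_dist n"
  shows "distr (gamma_dist m \<Otimes>\<^sub>M R) borel (\<lambda>(a, r). a + gamma_increment n (w r)) = gamma_dist (m + n)"
proof (cases "n = 0")
  case True
  interpret R: prob_space R by fact
  have "distr (gamma_dist m \<Otimes>\<^sub>M R) borel (\<lambda>(a, r). a + gamma_increment n (w r))
      = distr (gamma_dist m \<Otimes>\<^sub>M R) (gamma_dist m) fst"
    using True by (intro distr_cong) (auto simp: gamma_increment_def)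
  with True show ?thesis
    by (simp add: R.distr_pair_fst)
next
  case False
  have increment: "distr R borel (\<lambda>r. max 0 (w r)) = gamma_dist n"
    using distr_distr[of "max 0" borel borel w R] False
    by (simp add: law o_def distr_gamma_dist_max_0)
  have "distr (gamma_dist m \<Otimes>\<^sub>M R) borel (\<lambda>(a, r). a + gamma_increment n (w r))
      = distr (distr (gamma_dist m \<Otimes>\<^sub>M R) (borel \<Otimes>\<^sub>M borel) (\<lambda>(a, r). (a, max 0 (w r))))
          borel (\<lambda>(x, y). x + y)"
    using False by (subst distr_distr) (auto simp: gamma_increment_def o_def split_beta')
  also have "distr (gamma_dist m \<Otimes>\<^sub>M R) (borel \<Otimes>\<^sub>M borel) (\<lambda>(a, r). (a, max 0 (w r)))
      = distr (gamma_dist m) borel (\<lambda>a. a) \<Otimes>\<^sub>M distr R borel (\<lambda>r. max 0 (w r))"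
    by (rule pair_measure_distr[symmetric]) (auto simp: increment intro: prob_space_imp_sigma_finite)
  finally show ?thesis
    using m False by (simp add: increment distr_id2 gamma_dist_add)
qed

definition gamma_coupling :: "nat \<Rightarrow> nat \<Rightarrow> (real \<times> real \<times> real) measure" where
  "gamma_coupling p q =
     gamma_dist (min p q) \<Otimes>\<^sub>M (gamma_dist (p - min p q) \<Otimes>\<^sub>M gamma_dist (q - min p q))"

definition coupled_left :: "nat \<Rightarrow> nat \<Rightarrow> real \<times> real \<times> real \<Rightarrow> real" where
  "coupled_left p q = (\<lambda>(a, b, b'). a + gamma_increment (p - min p q) b)"

definition coupled_right :: "nat \<Rightarrow> nat \<Rightarrow> real \<times> real \<times> real \<Rightarrow> real" where
  "coupled_right p q = (\<lambda>(a, b, b'). a + gamma_increment (q - min p q) b')"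

lemma prob_space_gamma_coupling [simp]: "prob_space (gamma_coupling p q)"
  by (simp add: gamma_coupling_def prob_space_pair)

lemma sets_gamma_coupling [simp, measurable_cong]:
  "sets (gamma_coupling p q) = sets (borel \<Otimes>\<^sub>M (borel \<Otimes>\<^sub>M borel))"
  unfolding gamma_coupling_def by (intro sets_pair_measure_cong) simp_all

lemma coupled_left_measurable [measurable]: "coupled_left p q \<in> borel_measurable (gamma_coupling p q)"
  and coupled_right_measurable [measurable]: "coupled_right p q \<in> borel_measurable (gamma_coupling p q)"
  unfolding coupled_left_def coupled_right_def gamma_increment_def by measurable

lemma distr_coupled_left:
  assumes "p \<ge> 1" "q \<ge> 1"
  shows "distr (gamma_coupling p q) borel (coupled_left p q) = gamma_dist p"
proof -
  let ?R = "gamma_dist (p - min p q) \<Otimes>\<^sub>M gamma_dist (q - min p q)"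
  have "coupled_left p q = (\<lambda>(a, r). a + gamma_increment (p - min p q) (fst r))"
    by (auto simp: coupled_left_def)
  moreover have "distr (gamma_dist (min p q) \<Otimes>\<^sub>M ?R) borel
      (\<lambda>(a, r). a + gamma_increment (p - min p q) (fst r)) = gamma_dist (min p q + (p - min p q))"
  proof (rule distr_gamma_add_increment)
    show "distr ?R borel fst = gamma_dist (p - min p q)"
      using prob_space.distr_pair_fst by (metis distr_cong prob_space_gamma_dist sets_gamma_dist)
  qed (use assms in \<open>simp_all add: prob_space_pair\<close>)
  ultimately show ?thesis
    by (simp add: gamma_coupling_def)
qed

lemma distr_coupled_right:
  assumes "p \<ge> 1" "q \<ge> 1"
  shows "distr (gamma_coupling p q) borel (coupled_right p q) = gamma_dist q"
proof -
  let ?R = "gamma_dist (p - min p q) \<Otimes>\<^sub>M gamma_dist (q - min p q)"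
  have "coupled_right p q = (\<lambda>(a, r). a + gamma_increment (q - min p q) (snd r))"
    by (auto simp: coupled_right_def)
  moreover have "distr (gamma_dist (min p q) \<Otimes>\<^sub>M ?R) borel
      (\<lambda>(a, r). a + gamma_increment (q - min p q) (snd r)) = gamma_dist (min p q + (q - min p q))"
  proof (rule distr_gamma_add_increment)
    show "distr ?R borel snd = gamma_dist (q - min p q)"
      using distr_pair_snd by (metis distr_cong prob_space_gamma_dist sets_gamma_dist)
  qed (use assms in \<open>simp_all add: prob_space_pair\<close>)
  ultimately show ?thesis
    by (simp add: gamma_coupling_def)
qed

lemma coupled_right_le_left: "q \<le> p \<Longrightarrow> coupled_right p q z \<le> coupled_left p q z"
  by (cases z) (auto simp: coupled_left_def coupled_right_def gamma_increment_def)

lemma coupled_left_le_right: "p \<le> q \<Longrightarrow> coupled_left p q z \<le> coupled_right p q z"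
  by (cases z) (auto simp: coupled_left_def coupled_right_def gamma_increment_def)

lemma distr_pair_coupled_left:
  assumes "p \<ge> 1" "q \<ge> 1" "r \<ge> 1" "s \<ge> 1"
  shows "distr (gamma_coupling p q \<Otimes>\<^sub>M gamma_coupling r s) (borel \<Otimes>\<^sub>M borel)
      (map_prod (coupled_left p q) (coupled_left r s)) = gamma_dist p \<Otimes>\<^sub>M gamma_dist r"
  using pair_measure_distr[of "coupled_left p q" "gamma_coupling p q" borel
      "coupled_left r s" "gamma_coupling r s" borel] assms
  by (simp add: distr_coupled_left map_prod_def prob_space_imp_sigma_finite)

lemma distr_pair_coupled_right:
  assumes "p \<ge> 1" "q \<ge> 1" "r \<ge> 1" "s \<ge> 1"
  shows "distr (gamma_coupling p q \<Otimes>\<^sub>M gamma_coupling r s) (borel \<Otimes>\<^sub>M borel)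
      (map_prod (coupled_right p q) (coupled_right r s)) = gamma_dist q \<Otimes>\<^sub>M gamma_dist s"
  using pair_measure_distr[of "coupled_right p q" "gamma_coupling p q" borel
      "coupled_right r s" "gamma_coupling r s" borel] assms
  by (simp add: distr_coupled_right map_prod_def prob_space_imp_sigma_finite)

lemma space_mark_measure: "space (mark_measure K \<phi> \<Delta> \<Psi>) = (\<Pi>\<^sub>E i\<in>sites K \<phi>. UNIV)"
  by (auto simp: mark_measure_def space_PiM space_pair_measure PiE_iff split: prod.splits)

lemma covered_indep_shapes: "covered K \<B> \<phi> P \<beta> \<alpha> \<Delta> \<Psi> = covered K \<B> \<phi> P \<beta> \<alpha> \<Delta>' \<Psi>'"
  unfolding covered_def space_mark_measure ..

lemma mark_measure_eq_distr_PiM: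
  assumes "\<And>i. i \<in> sites K \<phi> \<Longrightarrow> prob_space (S i)"
    and "\<And>i. i \<in> sites K \<phi> \<Longrightarrow> f i \<in> measurable (S i) (borel \<Otimes>\<^sub>M borel)"
    and "\<And>i. i \<in> sites K \<phi> \<Longrightarrow>
      distr (S i) (borel \<Otimes>\<^sub>M borel) (f i) = gamma_dist (\<Delta> (fst i)) \<Otimes>\<^sub>M gamma_dist (\<Psi> (fst i))"
  shows "mark_measure K \<phi> \<Delta> \<Psi> = distr (PiM (sites K \<phi>) S) (PiM (sites K \<phi>) (\<lambda>_. borel \<Otimes>\<^sub>M borel))
      (\<lambda>z. \<lambda>i\<in>sites K \<phi>. f i (z i))"
proof -
  have "distr (PiM (sites K \<phi>) S) (PiM (sites K \<phi>) (\<lambda>_. borel \<Otimes>\<^sub>M borel))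
      (\<lambda>z. \<lambda>i\<in>sites K \<phi>. f i (z i))
      = PiM (sites K \<phi>) (\<lambda>i. distr (S i) (borel \<Otimes>\<^sub>M borel) (f i))"
    using assms(1,2) by (rule distr_PiM_map)
  also have "\<dots> = mark_measure K \<phi> \<Delta> \<Psi>"
    unfolding mark_measure_def by (rule PiM_cong) (auto simp: assms(3))
  finally show ?thesis ..
qed

lemma covered_mono_marks:
  assumes B: "\<B> \<subseteq> {1..K}" and P: "\<And>k. k \<in> {1..K} \<Longrightarrow> 0 \<le> P k"
    and \<omega>': "\<omega>' \<in> covered K \<B> \<phi> P \<beta> \<alpha> \<Delta> \<Psi>" and \<omega>: "\<omega> \<in> space (mark_measure K \<phi> \<Delta> \<Psi>)"
    and desired: "\<And>k x. k \<in> \<B> \<Longrightarrow> x \<in> \<phi> k \<Longrightarrow> fst (\<omega>' (k, x)) \<le> fst (\<omega> (k, x))"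
    and interfering: "\<And>i. i \<in> sites K \<phi> \<Longrightarrow> snd (\<omega> i) \<le> snd (\<omega>' i)"
  shows "\<omega> \<in> covered K \<B> \<phi> P \<beta> \<alpha> \<Delta> \<Psi>"
proof -
  from \<omega>' obtain k x where k: "k \<in> \<B>" "x \<in> \<phi> k" and gt: "SIR K \<phi> P \<alpha> \<omega>' k x > ennreal (\<beta> k)"
    by (auto simp: covered_def)
  have "interference K \<phi> P \<alpha> \<omega> x \<le> interference K \<phi> P \<alpha> \<omega>' x"
    unfolding interference_def
  proof (rule nn_integral_mono)
    fix jy assume "jy \<in> space (count_space {(j, y) \<in> sites K \<phi>. y \<noteq> x})"
    then have "jy \<in> sites K \<phi>" "0 \<le> P (fst jy)"
      using P by (auto simp: sites_def)
    then show "ennreal (P (fst jy) * snd (\<omega> jy) * norm (snd jy) powr - \<alpha>)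
        \<le> ennreal (P (fst jy) * snd (\<omega>' jy) * norm (snd jy) powr - \<alpha>)"
      using interfering by (intro ennreal_leI mult_right_mono mult_left_mono) auto
  qed
  moreover have "ennreal (P k * fst (\<omega>' (k, x)) * norm x powr - \<alpha>)
      \<le> ennreal (P k * fst (\<omega> (k, x)) * norm x powr - \<alpha>)"
    using P[of k] k B desired[OF k] by (intro ennreal_leI mult_right_mono mult_left_mono) auto
  ultimately have "SIR K \<phi> P \<alpha> \<omega>' k x \<le> SIR K \<phi> P \<alpha> \<omega> k x"
    unfolding SIR_def by (rule ennreal_divide_mono[rotated])
  with gt k \<omega> show ?thesis
    unfolding covered_def by (blast intro: less_le_trans)
qed

lemma conditional_coverage_mono:
  assumes B: "\<B> \<subseteq> {1..K}" and P: "\<And>k. k \<in> {1..K} \<Longrightarrow> 0 \<le> P k"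
    and shapes: "\<And>k. k \<in> {1..K} \<Longrightarrow> \<Delta> k > 0 \<and> \<Psi> k > 0 \<and> \<Delta>' k > 0 \<and> \<Psi>' k > 0"
    and desired: "\<And>k. k \<in> \<B> \<Longrightarrow> \<Delta>' k \<le> \<Delta> k"
    and interfering: "\<And>k. k \<in> {1..K} \<Longrightarrow> \<Psi> k \<le> \<Psi>' k"
  shows "emeasure (mark_measure K \<phi> \<Delta>' \<Psi>') (covered K \<B> \<phi> P \<beta> \<alpha> \<Delta>' \<Psi>')
    \<le> emeasure (mark_measure K \<phi> \<Delta> \<Psi>) (covered K \<B> \<phi> P \<beta> \<alpha> \<Delta> \<Psi>)"
proof -
  let ?I = "sites K \<phi>"
  let ?N = "PiM ?I (\<lambda>_. borel \<Otimes>\<^sub>M borel) :: marks measure"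
  define S where "S i = gamma_coupling (\<Delta> (fst i)) (\<Delta>' (fst i)) \<Otimes>\<^sub>M gamma_coupling (\<Psi> (fst i)) (\<Psi>' (fst i))"
    for i :: "nat \<times> point"
  define f where "f i = map_prod (coupled_left (\<Delta> (fst i)) (\<Delta>' (fst i)))
    (coupled_left (\<Psi> (fst i)) (\<Psi>' (fst i)))" for i :: "nat \<times> point"
  define f' where "f' i = map_prod (coupled_right (\<Delta> (fst i)) (\<Delta>' (fst i)))
    (coupled_right (\<Psi> (fst i)) (\<Psi>' (fst i)))" for i :: "nat \<times> point"
  have tier: "fst i \<in> {1..K}" if "i \<in> ?I" for i
    using that by (auto simp: sites_def)
  have site_shapes: "\<Delta> (fst i) \<ge> 1" "\<Delta>' (fst i) \<ge> 1" "\<Psi> (fst i) \<ge> 1" "\<Psi>' (fst i) \<ge> 1"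
    if "i \<in> ?I" for i
    using shapes[OF tier[OF that]] by auto
  have prob_S: "prob_space (S i)" for i
    by (simp add: S_def prob_space_pair)
  have measurable: "f i \<in> measurable (S i) (borel \<Otimes>\<^sub>M borel)" "f' i \<in> measurable (S i) (borel \<Otimes>\<^sub>M borel)" for i
    by (simp_all add: S_def f_def f'_def measurable_map_prod)
  have "mark_measure K \<phi> \<Delta> \<Psi> = distr (PiM ?I S) ?N (\<lambda>z. \<lambda>i\<in>?I. f i (z i))"
    using prob_S measurable site_shapes
    by (intro mark_measure_eq_distr_PiM) (simp_all add: S_def f_def distr_pair_coupled_left)
  moreover have "mark_measure K \<phi> \<Delta>' \<Psi>' = distr (PiM ?I S) ?N (\<lambda>z. \<lambda>i\<in>?I. f' i (z i))"
    using prob_S measurable site_shapes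
    by (intro mark_measure_eq_distr_PiM) (simp_all add: S_def f'_def distr_pair_coupled_right)
  moreover have "emeasure (distr (PiM ?I S) ?N (\<lambda>z. \<lambda>i\<in>?I. f' i (z i))) (covered K \<B> \<phi> P \<beta> \<alpha> \<Delta> \<Psi>)
    \<le> emeasure (distr (PiM ?I S) ?N (\<lambda>z. \<lambda>i\<in>?I. f i (z i))) (covered K \<B> \<phi> P \<beta> \<alpha> \<Delta> \<Psi>)"
  proof (rule emeasure_distr_mono_coupling[OF measurable_PiM_map measurable_PiM_map])
    fix z assume z: "(\<lambda>i\<in>?I. f' i (z i)) \<in> covered K \<B> \<phi> P \<beta> \<alpha> \<Delta> \<Psi>"
    show "(\<lambda>i\<in>?I. f i (z i)) \<in> covered K \<B> \<phi> P \<beta> \<alpha> \<Delta> \<Psi>"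
    proof (rule covered_mono_marks[OF B P z])
      fix k x assume "k \<in> \<B>" "x \<in> \<phi> k"
      with B desired show "fst ((\<lambda>i\<in>?I. f' i (z i)) (k, x)) \<le> fst ((\<lambda>i\<in>?I. f i (z i)) (k, x))"
        by (auto simp: f_def f'_def sites_def intro: coupled_right_le_left)
    next
      fix i assume "i \<in> ?I"
      with tier interfering show "snd ((\<lambda>i\<in>?I. f i (z i)) i) \<le> snd ((\<lambda>i\<in>?I. f' i (z i)) i)"
        by (simp add: f_def f'_def coupled_left_le_right)
    qed (auto simp: space_mark_measure)
  qed (use measurable in auto)
  ultimately show ?thesis
    by (simp add: covered_indep_shapes[of K \<B> \<phi> P \<beta> \<alpha> \<Delta>' \<Psi>' \<Delta> \<Psi>])
qed

theorem corollary4: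
  fixes K :: nat and \<B> :: "nat set" and Q :: "config measure"
    and P \<beta> :: "nat \<Rightarrow> real" and \<alpha> :: real
    and \<Delta> \<Psi> \<Delta>' \<Psi>' :: "nat \<Rightarrow> nat"
  assumes "\<B> \<subseteq> {1..K}"
    and "prob_space Q" and "sets Q = sets (config_space K)" and "stationary K Q"
    and "\<forall>k\<in>{1..K}. P k > 0 \<and> \<beta> k > 0"
    and "\<forall>k\<in>{1..K}. \<Delta> k > 0 \<and> \<Psi> k > 0 \<and> \<Delta>' k > 0 \<and> \<Psi>' k > 0"
    and "\<forall>k\<in>\<B>. \<Delta> k \<ge> \<Delta>' k"
    and "\<forall>k\<in>{1..K}. \<Psi> k \<le> \<Psi>' k"
  shows "coverage K \<B> Q P \<beta> \<alpha> \<Delta> \<Psi> \<ge> coverage K \<B> Q P \<beta> \<alpha> \<Delta>' \<Psi>'"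
  unfolding coverage_def
proof (rule nn_integral_mono)
  \<comment> \<open>The comparison holds configuration by configuration.\<close>
  fix \<phi>
  show "emeasure (mark_measure K \<phi> \<Delta>' \<Psi>') (covered K \<B> \<phi> P \<beta> \<alpha> \<Delta>' \<Psi>')
    \<le> emeasure (mark_measure K \<phi> \<Delta> \<Psi>) (covered K \<B> \<phi> P \<beta> \<alpha> \<Delta> \<Psi>)"
    using assms by (intro conditional_coverage_mono) (auto simp: less_imp_le)
qed

end
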